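(* Let $0\to(M,\alpha_M)\to(K,\alpha_K)\xrightarrow{\pi}(L,\alpha_L)\to0$ and $0\to(N,\alpha_N)\to(H,\alpha_H)\xrightarrow{\tau}(K,\alpha_K)\to0$ be central extensions of Hom-Leibniz $n$-algebras. (a) If $\pi\circ\tau:(H,\alpha_H)\to(L,\alpha_L)$ is a universal $\alpha$-central extension, then $\tau$ is a universal central extension. (b) If $\tau$ is a universal central extension, then $\pi\circ\tau$ is an $\alpha$-central extension which is universal over central extensions: for every central extension $\omega:(P,\alpha_P)\to(L,\alpha_L)$ there is a unique homomorphism $\Phi:(H,\alpha_H)\to(P,\alpha_P)$ with $\omega\circ\Phi=\pi\circ\tau$.
   Context: Fix a field $\mathbb K$ and $n\ge2$. A (multiplicative) Hom-Leibniz $n$-algebra is a $\mathbb K$-vector space $L$ with an $n$-linear bracket and a linear map $\alpha_L$ preserving the bracket, satisfying $[[x_1,\dots,x_n],\alpha_L(y_1),\dots,\alpha_L(y_{n-1})]=\sum_{i=1}^n[\alpha_L(x_1),\dots,[x_i,y_1,\dots,y_{n-1}],\dots,\alpha_L(x_n)]$. Homomorphisms preserve brackets and commute with twisting maps. Center $Z(K)$: elements $x$ with every bracket having $x$ in some position equal to $0$. An extension of $L$ is a surjective homomorphism $\pi:K\to L$ with kernel $M$; central if $M\subseteq Z(K)$; $\alpha$-central if every bracket with $n-1$ entries in $\alpha_K(M)$ and the remaining entry (any position) in $K$ vanishes. A central extension $\pi:K\to L$ is universal central (resp. universal $\alpha$-central) if for every central (resp. $\alpha$-central) extension $\pi':K'\to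 L$ there is a unique homomorphism $h:K\to K'$ with $\pi'\circ h=\pi$. *)

theory Defs
  imports Main "HOL-Library.Product_Plus"
begin

text \<open>A Hom-Leibniz n-algebra over a field 'k is represented by a carrier set inside a type
  'a with an (ambient) abelian group structure, a scalar multiplication, an n-ary bracket
  (applied to lists of length n) and a twisting map.\<close>

record ('k, 'a) hlnalg =
  carr :: "'a set"
  smul :: "'k \<Rightarrow> 'a \<Rightarrow> 'a"
  brk  :: "'a list \<Rightarrow> 'a"
  tw   :: "'a \<Rightarrow> 'a"

definition vspace :: "('k::field, 'a::ab_group_add) hlnalg \<Rightarrow> bool" where
  "vspace A \<longleftrightarrow>
     0 \<in> carr A \<and>
     (\<forall>x\<in>carr A. \<forall>y\<in>carr A. x + y \<in> carr A) \<and>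
     (\<forall>c. \<forall>x\<in>carr A. smul A c x \<in> carr A) \<and>
     (\<forall>c. \<forall>x\<in>carr A. \<forall>y\<in>carr A. smul A c (x + y) = smul A c x + smul A c y) \<and>
     (\<forall>a b. \<forall>x\<in>carr A. smul A (a + b) x = smul A a x + smul A b x) \<and>
     (\<forall>a b. \<forall>x\<in>carr A. smul A a (smul A b x) = smul A (a * b) x) \<and>
     (\<forall>x\<in>carr A. smul A 1 x = x)"

definition lin_map :: "('k::field, 'a::ab_group_add) hlnalg \<Rightarrow> ('k, 'b::ab_group_add) hlnalg
    \<Rightarrow> ('a \<Rightarrow> 'b) \<Rightarrow> bool" where
  "lin_map A B f \<longleftrightarrow>
     (\<forall>x\<in>carr A. f x \<in> carr B) \<and>
     (\<forall>x\<in>carr A. \<forall>y\<in>carr A. f (x + y) = f x + f y) \<and>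
     (\<forall>c. \<forall>x\<in>carr A. f (smul A c x) = smul B c (f x))"

definition ntuple :: "nat \<Rightarrow> ('k, 'a) hlnalg \<Rightarrow> 'a list \<Rightarrow> bool" where
  "ntuple n A xs \<longleftrightarrow> length xs = n \<and> set xs \<subseteq> carr A"

definition hom_leibniz :: "nat \<Rightarrow> ('k::field, 'a::ab_group_add) hlnalg \<Rightarrow> bool" where
  "hom_leibniz n A \<longleftrightarrow>
     vspace A \<and> lin_map A A (tw A) \<and>
     (\<forall>xs. ntuple n A xs \<longrightarrow> brk A xs \<in> carr A) \<and>
     (\<forall>xs i x y. ntuple n A xs \<and> i < n \<and> x \<in> carr A \<and> y \<in> carr A \<longrightarrow>
        brk A (xs[i := x + y]) = brk A (xs[i := x]) + brk A (xs[i := y])) \<and>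
     (\<forall>xs i c x. ntuple n A xs \<and> i < n \<and> x \<in> carr A \<longrightarrow>
        brk A (xs[i := smul A c x]) = smul A c (brk A (xs[i := x]))) \<and>
     (\<forall>xs. ntuple n A xs \<longrightarrow> tw A (brk A xs) = brk A (map (tw A) xs)) \<and>
     (\<forall>xs ys. ntuple n A xs \<and> ntuple (n - 1) A ys \<longrightarrow>
        brk A (brk A xs # map (tw A) ys) =
          (\<Sum>i<n. brk A ((map (tw A) xs)[i := brk A (xs ! i # ys)])))"

definition hom :: "nat \<Rightarrow> ('k::field, 'a::ab_group_add) hlnalg \<Rightarrow> ('k, 'b::ab_group_add) hlnalg
    \<Rightarrow> ('a \<Rightarrow> 'b) \<Rightarrow> bool" where
  "hom n A B f \<longleftrightarrow>
     lin_map A B f \<and>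
     (\<forall>xs. ntuple n A xs \<longrightarrow> f (brk A xs) = brk B (map f xs)) \<and>
     (\<forall>x\<in>carr A. f (tw A x) = tw B (f x))"

definition kernel :: "('k, 'a) hlnalg \<Rightarrow> ('a \<Rightarrow> 'b::zero) \<Rightarrow> 'a set" where
  "kernel K f = {x \<in> carr K. f x = 0}"

definition center :: "nat \<Rightarrow> ('k, 'a::zero) hlnalg \<Rightarrow> 'a set" where
  "center n K = {x \<in> carr K. \<forall>xs i. ntuple n K xs \<and> i < n \<longrightarrow> brk K (xs[i := x]) = 0}"

definition ext :: "nat \<Rightarrow> ('k::field, 'a::ab_group_add) hlnalg \<Rightarrow> ('k, 'b::ab_group_add) hlnalg
    \<Rightarrow> ('a \<Rightarrow> 'b) \<Rightarrow> bool" where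
  "ext n K L p \<longleftrightarrow> hom_leibniz n K \<and> hom_leibniz n L \<and> hom n K L p \<and> p ` carr K = carr L"

definition central_ext :: "nat \<Rightarrow> ('k::field, 'a::ab_group_add) hlnalg \<Rightarrow> ('k, 'b::ab_group_add) hlnalg
    \<Rightarrow> ('a \<Rightarrow> 'b) \<Rightarrow> bool" where
  "central_ext n K L p \<longleftrightarrow> ext n K L p \<and> kernel K p \<subseteq> center n K"

definition alpha_central_ext :: "nat \<Rightarrow> ('k::field, 'a::ab_group_add) hlnalg \<Rightarrow> ('k, 'b::ab_group_add) hlnalg
    \<Rightarrow> ('a \<Rightarrow> 'b) \<Rightarrow> bool" where
  "alpha_central_ext n K L p \<longleftrightarrow> ext n K L p \<and>
     (\<forall>xs i. ntuple n K xs \<and> i < n \<and> (\<forall>j<n. j \<noteq> i \<longrightarrow> xs ! j \<in> tw K ` kernel K p)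
        \<longrightarrow> brk K xs = 0)"

definition lifts_uniquely :: "nat \<Rightarrow> ('k::field, 'a::ab_group_add) hlnalg \<Rightarrow> ('k, 'q::ab_group_add) hlnalg
    \<Rightarrow> ('q \<Rightarrow> 'b) \<Rightarrow> ('a \<Rightarrow> 'b) \<Rightarrow> bool" where
  "lifts_uniquely n K P w p \<longleftrightarrow>
     (\<exists>h. hom n K P h \<and> (\<forall>x\<in>carr K. w (h x) = p x) \<and>
        (\<forall>h'. hom n K P h' \<and> (\<forall>x\<in>carr K. w (h' x) = p x) \<longrightarrow> (\<forall>x\<in>carr K. h' x = h x)))"

text \<open>Universality is relative to the type 'q in which the competing extensions live.\<close>
definition universal_central_ext :: "nat \<Rightarrow> 'q::ab_group_add itself \<Rightarrow> ('k::field, 'a::ab_group_add) hlnalg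
    \<Rightarrow> ('k, 'b::ab_group_add) hlnalg \<Rightarrow> ('a \<Rightarrow> 'b) \<Rightarrow> bool" where
  "universal_central_ext n T K L p \<longleftrightarrow> central_ext n K L p \<and>
     (\<forall>(P :: ('k, 'q) hlnalg) w. central_ext n P L w \<longrightarrow> lifts_uniquely n K P w p)"

definition universal_alpha_central_ext :: "nat \<Rightarrow> 'q::ab_group_add itself \<Rightarrow> ('k::field, 'a::ab_group_add) hlnalg
    \<Rightarrow> ('k, 'b::ab_group_add) hlnalg \<Rightarrow> ('a \<Rightarrow> 'b) \<Rightarrow> bool" where
  "universal_alpha_central_ext n T K L p \<longleftrightarrow> central_ext n K L p \<and>
     (\<forall>(P :: ('k, 'q) hlnalg) w. alpha_central_ext n P L w \<longrightarrow> lifts_uniquely n K P w p)"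

end

theory Submission
  imports Defs
begin

text \<open>Both parts rest on two facts. First, the source H of a universal (alpha-)central
  extension is perfect: otherwise a projection p of H onto a complement of the derived
  subalgebra [H,H] realizes H/[H,H] as an abelian Hom-Leibniz algebra A, and (p, f) and (0, f)
  are two different lifts of f into the trivial extension A x L. Second, the Leibniz identity
  shows that for a composite P -> K -> L of central extensions, every bracket with one entry in
  [P,P] and all others in the twisted kernel of P -> L vanishes.
  For (a), a central extension P -> K restricts to an alpha-central extension [P,P] -> L, whose
  universal lift Phi satisfies sigma o Phi = tau because both differ only centrally on the
  perfect H. For (b), pi o tau is alpha-central by the second fact, and a central extension
  P -> L is handled through the central extension of K given by the pullback P x_L K.\<close>

lemma vspaceD:
  assumes "vspace A"
  shows "0 \<in> carr A"
    and "\<And>x y. x \<in> carr A \<Longrightarrow> y \<in> carr A \<Longrightarrow> x + y \<in> carr A"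
    and "\<And>c x. x \<in> carr A \<Longrightarrow> smul A c x \<in> carr A"
    and "\<And>c x y. x \<in> carr A \<Longrightarrow> y \<in> carr A \<Longrightarrow> smul A c (x + y) = smul A c x + smul A c y"
    and "\<And>a b x. x \<in> carr A \<Longrightarrow> smul A (a + b) x = smul A a x + smul A b x"
    and "\<And>a b x. x \<in> carr A \<Longrightarrow> smul A a (smul A b x) = smul A (a * b) x"
    and "\<And>x. x \<in> carr A \<Longrightarrow> smul A 1 x = x"
  using assms unfolding vspace_def by auto

lemma vspace_smul_zero_left:
  assumes "vspace A" "x \<in> carr A"
  shows "smul A 0 x = 0"
  using vspaceD(5)[OF assms, of 0 0] by simp

lemma vspace_smul_zero_right:
  assumes "vspace A"
  shows "smul A c 0 = 0"
  using vspaceD(4)[OF assms vspaceD(1,1)[OF assms], of c] by simp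

lemma vspace_smul_minus_one:
  assumes "vspace A" "x \<in> carr A"
  shows "smul A (-1) x = - x"
proof -
  have "smul A (-1 + 1) x = smul A (-1) x + smul A 1 x"
    using vspaceD(5)[OF assms] .
  then have "0 = smul A (-1) x + x"
    using vspace_smul_zero_left[OF assms] vspaceD(7)[OF assms] by simp
  then show ?thesis
    by (simp add: eq_neg_iff_add_eq_0)
qed

lemma vspace_diff_closed:
  assumes "vspace A" "x \<in> carr A" "y \<in> carr A"
  shows "x - y \<in> carr A"
  using vspaceD(2)[OF assms(1,2) vspaceD(3)[OF assms(1,3), of "-1"]]
    vspace_smul_minus_one[OF assms(1,3)] by simp

lemma vspace_smul_diff:
  assumes "vspace A" "x \<in> carr A" "y \<in> carr A"
  shows "smul A c (x - y) = smul A c x - smul A c y"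
  using vspaceD(4)[OF assms(1) vspace_diff_closed[OF assms] assms(3), of c]
  by (simp add: algebra_simps)

lemma lin_mapD:
  assumes "lin_map A B f"
  shows "\<And>x. x \<in> carr A \<Longrightarrow> f x \<in> carr B"
    and "\<And>x y. x \<in> carr A \<Longrightarrow> y \<in> carr A \<Longrightarrow> f (x + y) = f x + f y"
    and "\<And>c x. x \<in> carr A \<Longrightarrow> f (smul A c x) = smul B c (f x)"
  using assms unfolding lin_map_def by auto

lemma lin_map_zero:
  assumes "lin_map A B f" "vspace A"
  shows "f 0 = 0"
  using lin_mapD(2)[OF assms(1) vspaceD(1,1)[OF assms(2)]] by simp

lemma lin_map_diff:
  assumes "lin_map A B f" "vspace A" "x \<in> carr A" "y \<in> carr A"
  shows "f (x - y) = f x - f y"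
  using lin_mapD(2)[OF assms(1) vspace_diff_closed[OF assms(2-4)] assms(4)]
  by (simp add: algebra_simps)

lemma hom_leibnizD:
  assumes "hom_leibniz n A"
  shows "vspace A"
    and "lin_map A A (tw A)"
    and "\<And>xs. ntuple n A xs \<Longrightarrow> brk A xs \<in> carr A"
    and "\<And>xs i x y. ntuple n A xs \<Longrightarrow> i < n \<Longrightarrow> x \<in> carr A \<Longrightarrow> y \<in> carr A \<Longrightarrow>
           brk A (xs[i := x + y]) = brk A (xs[i := x]) + brk A (xs[i := y])"
    and "\<And>xs i c x. ntuple n A xs \<Longrightarrow> i < n \<Longrightarrow> x \<in> carr A \<Longrightarrow>
           brk A (xs[i := smul A c x]) = smul A c (brk A (xs[i := x]))"
    and "\<And>xs. ntuple n A xs \<Longrightarrow> tw A (brk A xs) = brk A (map (tw A) xs)"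
    and "\<And>xs ys. ntuple n A xs \<Longrightarrow> ntuple (n - 1) A ys \<Longrightarrow>
           brk A (brk A xs # map (tw A) ys) =
             (\<Sum>i<n. brk A ((map (tw A) xs)[i := brk A (xs ! i # ys)]))"
  using assms unfolding hom_leibniz_def by auto

lemma homD:
  assumes "hom n A B f"
  shows "lin_map A B f"
    and "\<And>xs. ntuple n A xs \<Longrightarrow> f (brk A xs) = brk B (map f xs)"
    and "\<And>x. x \<in> carr A \<Longrightarrow> f (tw A x) = tw B (f x)"
  using assms unfolding hom_def by auto

lemma extD:
  assumes "ext n K L p"
  shows "hom_leibniz n K" "hom_leibniz n L" "hom n K L p" "p ` carr K = carr L"
  using assms unfolding ext_def by auto

lemma central_extD:
  assumes "central_ext n K L p"
  shows "hom_leibniz n K" "hom_leibniz n L" "hom n K L p" "p ` carr K = carr L"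
    and "\<And>x. x \<in> carr K \<Longrightarrow> p x = 0 \<Longrightarrow> x \<in> center n K"
  using assms unfolding central_ext_def ext_def kernel_def by auto

lemma ntuple_nth: "ntuple n A xs \<Longrightarrow> i < n \<Longrightarrow> xs ! i \<in> carr A"
  unfolding ntuple_def by auto

lemma ntuple_update: "ntuple n A xs \<Longrightarrow> x \<in> carr A \<Longrightarrow> ntuple n A (xs[i := x])"
  unfolding ntuple_def by (auto dest: set_update_subset_insert[THEN subsetD])

lemma ntuple_map:
  "ntuple n A xs \<Longrightarrow> (\<And>x. x \<in> carr A \<Longrightarrow> f x \<in> carr B) \<Longrightarrow> ntuple n B (map f xs)"
  unfolding ntuple_def by auto

lemma brk_update_zero:
  assumes "hom_leibniz n A" "ntuple n A xs" "i < n"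
  shows "brk A (xs[i := 0]) = 0"
proof -
  have "0 \<in> carr A"
    using vspaceD(1)[OF hom_leibnizD(1)[OF assms(1)]] .
  from hom_leibnizD(4)[OF assms this this] show ?thesis
    by simp
qed

lemma brk_nth_center:
  assumes "ntuple n A xs" "i < n" "xs ! i \<in> center n A"
  shows "brk A xs = 0"
proof -
  have "brk A (xs[i := xs ! i]) = 0"
    using assms unfolding center_def by blast
  then show ?thesis
    by simp
qed

lemma hom_tw: "hom_leibniz n A \<Longrightarrow> hom n A A (tw A)"
  unfolding hom_def using hom_leibnizD(2,6)[of n A] by blast

lemma hom_comp:
  assumes f: "hom n A B f" and g: "hom n B C g"
  shows "hom n A C (g \<circ> f)"
proof -
  have "(g \<circ> f) (brk A xs) = brk C (map (g \<circ> f) xs)" if "ntuple n A xs" for xs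
    using that homD(2)[OF f] homD(2)[OF g] ntuple_map[OF that lin_mapD(1)[OF homD(1)[OF f]]]
    by simp
  then show ?thesis
    using assms unfolding hom_def lin_map_def by simp
qed

lemma ext_comp: "ext n K L p \<Longrightarrow> ext n H K q \<Longrightarrow> ext n H L (p \<circ> q)"
  unfolding ext_def using hom_comp by (metis image_comp)

lemma hom_restrict_dom: "hom n A B f \<Longrightarrow> S \<subseteq> carr A \<Longrightarrow> hom n (A\<lparr>carr := S\<rparr>) B f"
  unfolding hom_def lin_map_def ntuple_def by (auto simp: subset_iff)

lemma hom_restrict_codom:
  "hom n A B f \<Longrightarrow> (\<And>x. x \<in> carr A \<Longrightarrow> f x \<in> S) \<Longrightarrow> hom n A (B\<lparr>carr := S\<rparr>) f"
  unfolding hom_def lin_map_def ntuple_def by auto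

lemma hom_extend_codom: "hom n A (B\<lparr>carr := S\<rparr>) f \<Longrightarrow> S \<subseteq> carr B \<Longrightarrow> hom n A B f"
  unfolding hom_def lin_map_def ntuple_def by auto

inductive_set derived :: "nat \<Rightarrow> ('k::field, 'a::ab_group_add) hlnalg \<Rightarrow> 'a set"
  for n A where
  derived_zero: "0 \<in> derived n A"
| derived_brk: "ntuple n A xs \<Longrightarrow> brk A xs \<in> derived n A"
| derived_add: "x \<in> derived n A \<Longrightarrow> y \<in> derived n A \<Longrightarrow> x + y \<in> derived n A"
| derived_smul: "x \<in> derived n A \<Longrightarrow> smul A c x \<in> derived n A"

definition perfect :: "nat \<Rightarrow> ('k::field, 'a::ab_group_add) hlnalg \<Rightarrow> bool" where
  "perfect n A \<longleftrightarrow> carr A \<subseteq> derived n A"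

lemma derived_subset:
  assumes "hom_leibniz n A"
  shows "derived n A \<subseteq> carr A"
proof
  fix x assume "x \<in> derived n A"
  then show "x \<in> carr A"
    by (induction rule: derived.induct) (use hom_leibnizD(1,3)[OF assms] vspaceD in auto)
qed

lemma hom_image_derived:
  assumes hA: "hom_leibniz n A" and f: "hom n A B f" and vB: "vspace B"
  shows "x \<in> derived n A \<Longrightarrow> f x \<in> derived n B"
proof (induction rule: derived.induct)
  case derived_zero
  show ?case
    using lin_map_zero[OF homD(1)[OF f] hom_leibnizD(1)[OF hA]] derived.derived_zero by simp
next
  case (derived_brk xs)
  have "ntuple n B (map f xs)"
    using ntuple_map[OF derived_brk lin_mapD(1)[OF homD(1)[OF f]]] .
  then show ?case
    using homD(2)[OF f derived_brk] derived.derived_brk by simp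
next
  case (derived_add x y)
  then show ?case
    using lin_mapD(2)[OF homD(1)[OF f]] subsetD[OF derived_subset[OF hA]] derived.derived_add by auto
next
  case (derived_smul x c)
  then show ?case
    using lin_mapD(3)[OF homD(1)[OF f]] subsetD[OF derived_subset[OF hA]] derived.derived_smul by auto
qed

lemma tw_derived: "hom_leibniz n A \<Longrightarrow> x \<in> derived n A \<Longrightarrow> tw A x \<in> derived n A"
  using hom_image_derived hom_tw hom_leibnizD(1) by blast

lemma derived_lift:
  assumes hH: "hom_leibniz n H" and hP: "hom_leibniz n P"
    and t: "hom n H K \<tau>" and s: "hom n P K \<sigma>" and surj: "\<sigma> ` carr P = carr K"
  shows "d \<in> derived n H \<Longrightarrow> \<exists>q\<in>derived n P. \<sigma> q = \<tau> d"
proof (induction rule: derived.induct)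
  case derived_zero
  show ?case
    using derived.derived_zero lin_map_zero[OF homD(1)[OF t] hom_leibnizD(1)[OF hH]]
      lin_map_zero[OF homD(1)[OF s] hom_leibnizD(1)[OF hP]] by metis
next
  case (derived_brk xs)
  have "\<exists>p. p \<in> carr P \<and> \<sigma> p = \<tau> x" if "x \<in> carr H" for x
    using surj lin_mapD(1)[OF homD(1)[OF t] that] by force
  then obtain g where g: "\<And>x. x \<in> carr H \<Longrightarrow> g x \<in> carr P \<and> \<sigma> (g x) = \<tau> x"
    by metis
  have gxs: "ntuple n P (map g xs)"
    using ntuple_map[OF derived_brk] g by blast
  have lifted: "map \<sigma> (map g xs) = map \<tau> xs"
    using g derived_brk unfolding ntuple_def by auto
  have "\<sigma> (brk P (map g xs)) = brk K (map \<sigma> (map g xs))"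
    using homD(2)[OF s gxs] .
  also have "\<dots> = \<tau> (brk H xs)"
    unfolding lifted using homD(2)[OF t derived_brk] by simp
  finally show ?case
    using derived.derived_brk[OF gxs] by blast
next
  case (derived_add x y)
  then obtain q1 q2 where q: "q1 \<in> derived n P" "\<sigma> q1 = \<tau> x" "q2 \<in> derived n P" "\<sigma> q2 = \<tau> y"
    by blast
  then have "\<sigma> (q1 + q2) = \<tau> (x + y)"
    using lin_mapD(2)[OF homD(1)[OF s]] lin_mapD(2)[OF homD(1)[OF t]]
      subsetD[OF derived_subset[OF hP]] subsetD[OF derived_subset[OF hH]] derived_add.hyps by auto
  then show ?case
    using derived.derived_add[OF q(1,3)] by blast
next
  case (derived_smul x c)
  then obtain q where q: "q \<in> derived n P" "\<sigma> q = \<tau> x"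
    by blast
  then have "\<sigma> (smul P c q) = \<tau> (smul H c x)"
    using lin_mapD(3)[OF homD(1)[OF s]] lin_mapD(3)[OF homD(1)[OF t]]
      subsetD[OF derived_subset[OF hP]] subsetD[OF derived_subset[OF hH]] derived_smul.hyps by auto
  then show ?case
    using derived.derived_smul[OF q(1)] by blast
qed

lemma brk_central_perturb:
  assumes hA: "hom_leibniz n A" and xs: "ntuple n A xs" and ys: "ntuple n A ys"
    and d: "\<And>j. j < n \<Longrightarrow> ys ! j - xs ! j \<in> center n A"
  shows "brk A ys = brk A xs"
proof -
  have lx: "length xs = n" and ly: "length ys = n"
    using xs ys unfolding ntuple_def by auto
  define z where "z k = map (\<lambda>j. if j < k then ys ! j else xs ! j) [0..<n]" for k
  have zn: "ntuple n A (z k)" for k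
    unfolding z_def ntuple_def using ntuple_nth[OF xs] ntuple_nth[OF ys] by auto
  have "brk A (z k) = brk A xs" if "k \<le> n" for k
    using that
  proof (induction k)
    case 0
    have "z 0 = xs"
      unfolding z_def using lx map_nth[of xs] by simp
    then show ?case
      by simp
  next
    case (Suc k)
    then have k: "k < n"
      by simp
    have step: "z (Suc k) = (z k)[k := xs ! k + (ys ! k - xs ! k)]"
      by (rule nth_equalityI) (auto simp: z_def nth_list_update less_Suc_eq)
    have "z k = (z k)[k := xs ! k]"
      by (rule nth_equalityI) (auto simp: z_def nth_list_update)
    moreover have "brk A ((z k)[k := ys ! k - xs ! k]) = 0"
      using d[OF k] zn k unfolding center_def by blast
    ultimately show ?case
      using Suc hom_leibnizD(4)[OF hA zn k ntuple_nth[OF xs k]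
          vspace_diff_closed[OF hom_leibnizD(1)[OF hA] ntuple_nth[OF ys k] ntuple_nth[OF xs k]]]
      unfolding step by simp
  qed
  moreover have "z n = ys"
    unfolding z_def using ly by (intro nth_equalityI) auto
  ultimately show ?thesis
    by (metis order_refl)
qed

lemma hom_eq_on_derived:
  assumes hH: "hom_leibniz n H" and hK: "hom_leibniz n K"
    and f: "hom n H K f" and g: "hom n H K g"
    and d: "\<And>x. x \<in> carr H \<Longrightarrow> f x - g x \<in> center n K"
  shows "x \<in> derived n H \<Longrightarrow> f x = g x"
proof (induction rule: derived.induct)
  case derived_zero
  show ?case
    using lin_map_zero[OF homD(1)[OF f]] lin_map_zero[OF homD(1)[OF g]] hom_leibnizD(1)[OF hH]
    by simp
next
  case (derived_brk xs)
  have "brk K (map f xs) = brk K (map g xs)"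
  proof (rule brk_central_perturb[OF hK])
    show "ntuple n K (map g xs)" "ntuple n K (map f xs)"
      using ntuple_map[OF derived_brk] lin_mapD(1)[OF homD(1)[OF f]]
        lin_mapD(1)[OF homD(1)[OF g]] by blast+
    show "map f xs ! j - map g xs ! j \<in> center n K" if "j < n" for j
      using d[OF ntuple_nth[OF derived_brk that]] that derived_brk
      unfolding ntuple_def by simp
  qed
  then show ?case
    using homD(2)[OF f derived_brk] homD(2)[OF g derived_brk] by simp
next
  case (derived_add x y)
  then show ?case
    using lin_mapD(2)[OF homD(1)[OF f]] lin_mapD(2)[OF homD(1)[OF g]]
      subsetD[OF derived_subset[OF hH]] by auto
next
  case (derived_smul x c)
  then show ?case
    using lin_mapD(3)[OF homD(1)[OF f]] lin_mapD(3)[OF homD(1)[OF g]]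
      subsetD[OF derived_subset[OF hH]] by auto
qed

lemma exists_other_index:
  fixes n i :: nat
  assumes "n \<ge> 2" "i < n"
  obtains j where "j < n" "j \<noteq> i"
  using that[of "if i = 0 then 1 else 0"] assms by auto

lemma ntuple_untwist:
  assumes xs: "ntuple n A xs" and i: "i < n" and z: "z \<in> carr A" and G: "G \<subseteq> carr A"
    and tw: "\<forall>j<n. j \<noteq> i \<longrightarrow> xs ! j \<in> tw A ` G"
  obtains ws where "ntuple n A ws" "ws ! i = z"
    "\<And>j. j < n \<Longrightarrow> j \<noteq> i \<Longrightarrow> ws ! j \<in> G \<and> xs ! j = tw A (ws ! j)"
proof -
  have "\<forall>j. \<exists>g. j < n \<and> j \<noteq> i \<longrightarrow> g \<in> G \<and> xs ! j = tw A g"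
    using tw by blast
  then obtain g where g: "\<And>j. j < n \<Longrightarrow> j \<noteq> i \<Longrightarrow> g j \<in> G \<and> xs ! j = tw A (g j)"
    by metis
  define ws where "ws = map (\<lambda>j. if j = i then z else g j) [0..<n]"
  have "ntuple n A ws"
    using z g G unfolding ntuple_def ws_def by auto
  moreover have "ws ! i = z"
    using i unfolding ws_def by simp
  ultimately show ?thesis
    using that g unfolding ws_def by simp
qed

text \<open>Write the entries of xs other than the i-th as tw g_j with g_j in G, and apply the
  Leibniz identity to the tuple of the g_j with hd zs in position i against tl zs: its left
  side and all summands except the i-th have a bracket with an entry in G inside, hence vanish,
  and the i-th summand is the bracket in question.\<close>
lemma brk_twisted_update_brk_zero:
  assumes hA: "hom_leibniz n A" and n2: "n \<ge> 2" and G: "G \<subseteq> carr A"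
    and cen: "\<And>zs j. ntuple n A zs \<Longrightarrow> j < n \<Longrightarrow> zs ! j \<in> G \<Longrightarrow> brk A zs \<in> center n A"
    and xs: "ntuple n A xs" and i: "i < n" and tw: "\<forall>j<n. j \<noteq> i \<longrightarrow> xs ! j \<in> tw A ` G"
    and zs: "ntuple n A zs"
  shows "brk A (xs[i := brk A zs]) = 0"
proof -
  have lx: "length xs = n"
    using xs unfolding ntuple_def by simp
  obtain z zr where zs_eq: "zs = z # zr"
    using zs n2 unfolding ntuple_def by (cases zs) auto
  have z: "z \<in> carr A" and zr: "ntuple (n - 1) A zr"
    using zs unfolding zs_eq ntuple_def by auto
  obtain ws where ws: "ntuple n A ws" and wsi: "ws ! i = z"
    and wsj: "\<And>j. j < n \<Longrightarrow> j \<noteq> i \<Longrightarrow> ws ! j \<in> G \<and> xs ! j = tw A (ws ! j)"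
    using ntuple_untwist[OF xs i z G tw] by blast
  have lw: "length ws = n"
    using ws unfolding ntuple_def by simp
  have tw_carr: "\<And>x. x \<in> carr A \<Longrightarrow> tw A x \<in> carr A"
    using lin_mapD(1)[OF hom_leibnizD(2)[OF hA]] .
  obtain j0 where j0: "j0 < n" "j0 \<noteq> i"
    using exists_other_index[OF n2 i] .
  have "brk A ws \<in> center n A"
    using cen[OF ws j0(1)] wsj[OF j0] by blast
  moreover have "ntuple n A (brk A ws # map (tw A) zr)"
    using zr hom_leibnizD(3)[OF hA ws] tw_carr n2 unfolding ntuple_def by auto
  ultimately have lhs: "brk A (brk A ws # map (tw A) zr) = 0"
    using brk_nth_center[of n A _ 0] n2 by simp
  have others: "brk A ((map (tw A) ws)[j := brk A (ws ! j # zr)]) = 0" if "j < n" "j \<noteq> i" for j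
  proof -
    have wzr: "ntuple n A (ws ! j # zr)"
      using zr ntuple_nth[OF ws that(1)] n2 unfolding ntuple_def by auto
    have "brk A (ws ! j # zr) \<in> center n A"
      using cen[OF wzr, of 0] n2 wsj[OF that] by simp
    then have "(map (tw A) ws)[j := brk A (ws ! j # zr)] ! j \<in> center n A"
      using that(1) lw by simp
    with ntuple_update[OF ntuple_map[OF ws tw_carr] hom_leibnizD(3)[OF hA wzr]] that(1)
    show ?thesis
      by (rule brk_nth_center)
  qed
  have ith: "(map (tw A) ws)[i := brk A (ws ! i # zr)] = xs[i := brk A zs]"
    by (rule nth_equalityI) (use i lw lx wsi wsj zs_eq in \<open>auto simp: nth_list_update\<close>)
  have "brk A (brk A ws # map (tw A) zr) =
      (\<Sum>j<n. brk A ((map (tw A) ws)[j := brk A (ws ! j # zr)]))"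
    using hom_leibnizD(7)[OF hA ws zr] .
  also have "\<dots> = (\<Sum>j\<in>{i}. brk A ((map (tw A) ws)[j := brk A (ws ! j # zr)]))"
    by (rule sum.mono_neutral_right) (use i others in auto)
  finally show ?thesis
    using lhs ith by simp
qed

lemma brk_twisted_update_derived_zero:
  assumes hA: "hom_leibniz n A" and n2: "n \<ge> 2" and G: "G \<subseteq> carr A"
    and cen: "\<And>zs j. ntuple n A zs \<Longrightarrow> j < n \<Longrightarrow> zs ! j \<in> G \<Longrightarrow> brk A zs \<in> center n A"
  shows "x \<in> derived n A \<Longrightarrow> ntuple n A xs \<Longrightarrow> i < n \<Longrightarrow>
    \<forall>j<n. j \<noteq> i \<longrightarrow> xs ! j \<in> tw A ` G \<Longrightarrow> brk A (xs[i := x]) = 0"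
proof (induction arbitrary: xs rule: derived.induct)
  case derived_zero
  then show ?case
    using brk_update_zero[OF hA] by blast
next
  case (derived_brk zs)
  then show ?case
    by (intro brk_twisted_update_brk_zero[OF hA n2 G]) (auto intro: cen)
next
  case (derived_add x y)
  then show ?case
    using hom_leibnizD(4)[OF hA] subsetD[OF derived_subset[OF hA]] by simp
next
  case (derived_smul x c)
  then show ?case
    using hom_leibnizD(5)[OF hA] subsetD[OF derived_subset[OF hA]]
      vspace_smul_zero_right[OF hom_leibnizD(1)[OF hA]] by simp
qed

lemma brk_center_of_comp_kernel:
  assumes cK: "central_ext n K L \<pi>" and cH: "central_ext n H K \<tau>"
    and zs: "ntuple n H zs" and j: "j < n" and ker: "zs ! j \<in> kernel H (\<pi> \<circ> \<tau>)"
  shows "brk H zs \<in> center n H"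
proof -
  have ht: "hom n H K \<tau>"
    using central_extD(3)[OF cH] .
  have tz: "\<tau> (zs ! j) \<in> center n K"
    using ker central_extD(5)[OF cK] lin_mapD(1)[OF homD(1)[OF ht]] unfolding kernel_def by auto
  have "\<tau> (brk H zs) = brk K (map \<tau> zs)"
    using homD(2)[OF ht zs] .
  also have "\<dots> = 0"
    using brk_nth_center[OF ntuple_map[OF zs lin_mapD(1)[OF homD(1)[OF ht]]] j] tz zs j
    unfolding ntuple_def by simp
  finally show ?thesis
    using central_extD(5)[OF cH] hom_leibnizD(3)[OF central_extD(1)[OF cH] zs] by blast
qed

lemma brk_comp_kernel_twisted_zero:
  assumes n2: "n \<ge> 2" and cK: "central_ext n K L \<pi>" and cH: "central_ext n H K \<tau>"
    and x: "x \<in> derived n H" and xs: "ntuple n H xs" and i: "i < n"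
    and tw: "\<forall>j<n. j \<noteq> i \<longrightarrow> xs ! j \<in> tw H ` kernel H (\<pi> \<circ> \<tau>)"
  shows "brk H (xs[i := x]) = 0"
  using brk_twisted_update_derived_zero[OF central_extD(1)[OF cH] n2 _ _ x xs i tw]
    brk_center_of_comp_kernel[OF cK cH] unfolding kernel_def by blast

definition subspace :: "('k::field, 'a::ab_group_add) hlnalg \<Rightarrow> 'a set \<Rightarrow> bool" where
  "subspace A C \<longleftrightarrow> C \<subseteq> carr A \<and> 0 \<in> C \<and> (\<forall>x\<in>C. \<forall>y\<in>C. x + y \<in> C) \<and>
     (\<forall>c. \<forall>x\<in>C. smul A c x \<in> C)"

lemma subspaceD:
  assumes "subspace A C"
  shows "C \<subseteq> carr A" "0 \<in> C" "\<And>x y. x \<in> C \<Longrightarrow> y \<in> C \<Longrightarrow> x + y \<in> C"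
    "\<And>c x. x \<in> C \<Longrightarrow> smul A c x \<in> C"
  using assms unfolding subspace_def by auto

lemma subspace_diff:
  assumes "vspace A" "subspace A C" "x \<in> C" "y \<in> C"
  shows "x - y \<in> C"
  using subspaceD(3)[OF assms(2,3) subspaceD(4)[OF assms(2,4), of "-1"]]
    vspace_smul_minus_one[OF assms(1)] subspaceD(1)[OF assms(2)] assms(4) by auto

lemma derived_subspace: "hom_leibniz n A \<Longrightarrow> subspace A (derived n A)"
  unfolding subspace_def using derived_subset derived.intros by blast

lemma subspace_chain_Union:
  assumes ne: "CC \<noteq> {}" and chain: "subset.chain {C. subspace A C \<and> C \<inter> D = {0}} CC"
  shows "subspace A (\<Union>CC) \<and> \<Union>CC \<inter> D = {0}"
proof -
  have sub: "subspace A C" "C \<inter> D = {0}" if "C \<in> CC" for C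
    using chain that unfolding subset.chain_def by auto
  have common: "\<exists>Z\<in>CC. x \<in> Z \<and> y \<in> Z" if xy: "x \<in> \<Union>CC" "y \<in> \<Union>CC" for x y
  proof -
    obtain X Y where "X \<in> CC" "Y \<in> CC" "x \<in> X" "y \<in> Y"
      using xy by auto
    moreover have "X \<subseteq> Y \<or> Y \<subseteq> X"
      using chain \<open>X \<in> CC\<close> \<open>Y \<in> CC\<close> unfolding subset.chain_def by blast
    ultimately show ?thesis
      by blast
  qed
  have "subspace A (\<Union>CC)"
    unfolding subspace_def
  proof (intro conjI ballI allI)
    show "\<Union>CC \<subseteq> carr A" "0 \<in> \<Union>CC"
      using sub(1) subspaceD(1,2) ne by blast+
    show "x + y \<in> \<Union>CC" if "x \<in> \<Union>CC" "y \<in> \<Union>CC" for x y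
      using common[OF that] sub(1) subspaceD(3) by blast
    show "smul A c x \<in> \<Union>CC" if "x \<in> \<Union>CC" for c x
      using that sub(1) subspaceD(4) by blast
  qed
  moreover have "\<Union>CC \<inter> D = {0}"
    using sub ne by blast
  ultimately show ?thesis ..
qed

lemma subspace_add_line:
  assumes v: "vspace A" and C: "subspace A C" and y: "y \<in> carr A"
  shows "subspace A {c + smul A t y | c t. c \<in> C}"
  unfolding subspace_def
proof (intro conjI ballI allI)
  show "{c + smul A t y | c t. c \<in> C} \<subseteq> carr A"
    using subspaceD(1)[OF C] vspaceD(2,3)[OF v] y by auto
  show "0 \<in> {c + smul A t y | c t. c \<in> C}"
    using subspaceD(2)[OF C] vspace_smul_zero_left[OF v y] by force
next
  fix a b assume "a \<in> {c + smul A t y | c t. c \<in> C}" "b \<in> {c + smul A t y | c t. c \<in> C}"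
  then obtain c1 t1 c2 t2 where "a = c1 + smul A t1 y" "b = c2 + smul A t2 y" "c1 \<in> C" "c2 \<in> C"
    by auto
  then have "a + b = (c1 + c2) + smul A (t1 + t2) y" "c1 + c2 \<in> C"
    using vspaceD(5)[OF v y] subspaceD(3)[OF C] by (auto simp: algebra_simps)
  then show "a + b \<in> {c + smul A t y | c t. c \<in> C}"
    by blast
next
  fix s a assume "a \<in> {c + smul A t y | c t. c \<in> C}"
  then obtain c t where a: "a = c + smul A t y" "c \<in> C"
    by auto
  then have "smul A s a = smul A s c + smul A (s * t) y"
    using vspaceD(4)[OF v _ vspaceD(3)[OF v y]] vspaceD(6)[OF v y] subspaceD(1)[OF C] by auto
  then show "smul A s a \<in> {c + smul A t y | c t. c \<in> C}"
    using subspaceD(4)[OF C a(2)] by blast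
qed

lemma add_line_inter:
  assumes v: "vspace A" and C: "subspace A C" and D: "subspace A D" and CD: "C \<inter> D = {0}"
    and y: "y \<in> carr A" and y_out: "\<forall>c\<in>C. y - c \<notin> D"
  shows "{c + smul A t y | c t. c \<in> C} \<inter> D = {0}"
proof -
  have "z = 0" if "c \<in> C" "z = c + smul A t y" "z \<in> D" for z c t
  proof (cases "t = 0")
    case True
    then show ?thesis
      using that CD vspace_smul_zero_left[OF v y] by auto
  next
    case False
    have c: "c \<in> carr A"
      using that(1) subspaceD(1)[OF C] by auto
    have "smul A (1 / t) z = smul A (1 / t) c + y"
      using that(2) vspaceD(4)[OF v c vspaceD(3)[OF v y]] vspaceD(6,7)[OF v y] False by simp
    then have "y - (- smul A (1 / t) c) \<in> D"
      using subspaceD(4)[OF D that(3), of "1 / t"] by (simp add: algebra_simps)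
    moreover have "- smul A (1 / t) c \<in> C"
      using subspace_diff[OF v C subspaceD(2)[OF C] subspaceD(4)[OF C that(1)]] by simp
    ultimately show ?thesis
      using y_out by blast
  qed
  moreover have "0 \<in> {c + smul A t y | c t. c \<in> C} \<inter> D"
    using subspaceD(2)[OF subspace_add_line[OF v C y]] subspaceD(2)[OF D] by blast
  ultimately show ?thesis
    by blast
qed

text \<open>A maximal subspace C meeting D trivially (Zorn) must satisfy C + D = A: otherwise
  adjoining a vector outside C + D keeps the intersection trivial.\<close>
lemma exists_complement:
  assumes v: "vspace A" and D: "subspace A D"
  obtains C where "subspace A C" "C \<inter> D = {0}" "\<And>y. y \<in> carr A \<Longrightarrow> \<exists>c\<in>C. y - c \<in> D"
proof -
  let ?S = "{C. subspace A C \<and> C \<inter> D = {0}}"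
  have "{0} \<in> ?S"
    using subspaceD(2)[OF D] vspaceD(1)[OF v] vspace_smul_zero_right[OF v]
    unfolding subspace_def by auto
  then have "?S \<noteq> {}"
    by blast
  moreover have "\<Union>CC \<in> ?S" if "CC \<noteq> {}" "subset.chain ?S CC" for CC
    using subspace_chain_Union[OF that] by simp
  ultimately have "\<exists>M\<in>?S. \<forall>X\<in>?S. M \<subseteq> X \<longrightarrow> X = M"
    by (rule subset_Zorn_nonempty)
  then obtain C where C: "subspace A C" and CD: "C \<inter> D = {0}"
    and max: "\<And>X. X \<in> ?S \<Longrightarrow> C \<subseteq> X \<Longrightarrow> X = C"
    by auto
  have "\<exists>c\<in>C. y - c \<in> D" if y: "y \<in> carr A" for y
  proof (rule ccontr)
    assume y_out: "\<not> (\<exists>c\<in>C. y - c \<in> D)"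
    let ?C' = "{c + smul A t y | c t. c \<in> C}"
    have "?C' \<in> ?S"
      using subspace_add_line[OF v C y] add_line_inter[OF v C D CD y] y_out by blast
    moreover have "C \<subseteq> ?C'"
      using vspace_smul_zero_left[OF v y] by force
    ultimately have "?C' = C"
      by (rule max)
    moreover have "y = 0 + smul A 1 y"
      using vspaceD(7)[OF v y] by simp
    then have "y \<in> ?C'"
      using subspaceD(2)[OF C] by blast
    ultimately have "y \<in> C"
      by simp
    then show False
      using y_out subspaceD(2)[OF D] by force
  qed
  then show ?thesis
    using that C CD by blast
qed

lemma exists_projection:
  assumes v: "vspace A" and D: "subspace A D"
  obtains p where "lin_map A A p" "\<And>x. x \<in> D \<Longrightarrow> p x = 0"
    "\<And>x. x \<in> carr A \<Longrightarrow> x - p x \<in> D"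
proof -
  obtain C where C: "subspace A C" and CD: "C \<inter> D = {0}"
    and span: "\<And>y. y \<in> carr A \<Longrightarrow> \<exists>c\<in>C. y - c \<in> D"
    using exists_complement[OF v D] by blast
  define p where "p y = (SOME c. c \<in> C \<and> y - c \<in> D)" for y
  have pC: "p y \<in> C" "y - p y \<in> D" if "y \<in> carr A" for y
    using someI_ex[OF span[OF that, unfolded Bex_def]] unfolding p_def by auto
  have p_eq: "p y = c" if "y \<in> carr A" "c \<in> C" "y - c \<in> D" for y c
  proof -
    have "c - p y = (y - p y) - (y - c)"
      by simp
    then have "c - p y \<in> C \<inter> D"
      using subspace_diff[OF v D pC(2)[OF that(1)] that(3)]
        subspace_diff[OF v C that(2) pC(1)[OF that(1)]] by simp
    then show ?thesis
      using CD by simp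
  qed
  have Cc: "C \<subseteq> carr A" and Dc: "D \<subseteq> carr A"
    using subspaceD(1) C D by auto
  have "lin_map A A p"
    unfolding lin_map_def
  proof (intro conjI ballI allI)
    show "p x \<in> carr A" if "x \<in> carr A" for x
      using pC(1)[OF that] Cc by auto
    show "p (x + y) = p x + p y" if "x \<in> carr A" "y \<in> carr A" for x y
      using p_eq[OF vspaceD(2)[OF v that] subspaceD(3)[OF C pC(1)[OF that(1)] pC(1)[OF that(2)]]]
        subspaceD(3)[OF D pC(2)[OF that(1)] pC(2)[OF that(2)]] by (simp add: algebra_simps)
    show "p (smul A c x) = smul A c (p x)" if "x \<in> carr A" for c x
      using p_eq[OF vspaceD(3)[OF v that] subspaceD(4)[OF C pC(1)[OF that]]]
        subspaceD(4)[OF D pC(2)[OF that]] vspace_smul_diff[OF v that] pC(1)[OF that] Cc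
      by auto
  qed
  moreover have "p x = 0" if "x \<in> D" for x
    using p_eq[OF _ subspaceD(2)[OF C]] that Dc by auto
  ultimately show ?thesis
    using that pC(2) by blast
qed

definition prod_alg :: "('k::field, 'a::ab_group_add) hlnalg \<Rightarrow> ('k, 'b::ab_group_add) hlnalg \<Rightarrow>
    ('a \<times> 'b) set \<Rightarrow> ('k, 'a \<times> 'b) hlnalg" where
  "prod_alg A B S =
     \<lparr>carr = S, smul = \<lambda>c x. (smul A c (fst x), smul B c (snd x)),
      brk = \<lambda>xs. (brk A (map fst xs), brk B (map snd xs)), tw = \<lambda>x. (tw A (fst x), tw B (snd x))\<rparr>"

lemma prod_alg_simps [simp]:
  "carr (prod_alg A B S) = S"
  "smul (prod_alg A B S) c x = (smul A c (fst x), smul B c (snd x))"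
  "brk (prod_alg A B S) xs = (brk A (map fst xs), brk B (map snd xs))"
  "tw (prod_alg A B S) x = (tw A (fst x), tw B (snd x))"
  unfolding prod_alg_def by auto

lemma ntuple_prod_alg:
  assumes "ntuple n (prod_alg A B S) xs" "S \<subseteq> carr A \<times> carr B"
  shows "ntuple n A (map fst xs)" "ntuple n B (map snd xs)"
  using assms unfolding ntuple_def by auto

lemma prod_alg_leibniz:
  assumes hA: "hom_leibniz n A" and hB: "hom_leibniz n B" and S: "S \<subseteq> carr A \<times> carr B"
    and xs: "ntuple n (prod_alg A B S) xs" and ys: "ntuple (n - 1) (prod_alg A B S) ys"
  defines "Q \<equiv> prod_alg A B S"
  shows "brk Q (brk Q xs # map (tw Q) ys) = (\<Sum>i<n. brk Q ((map (tw Q) xs)[i := brk Q (xs ! i # ys)]))"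
proof (rule prod_eqI)
  have lx: "length xs = n"
    using xs unfolding ntuple_def by simp
  show "fst (brk Q (brk Q xs # map (tw Q) ys)) =
      fst (\<Sum>i<n. brk Q ((map (tw Q) xs)[i := brk Q (xs ! i # ys)]))"
    using hom_leibnizD(7)[OF hA ntuple_prod_alg(1)[OF xs S] ntuple_prod_alg(1)[OF ys S]] lx
    by (simp add: Q_def fst_sum map_update o_def)
  show "snd (brk Q (brk Q xs # map (tw Q) ys)) =
      snd (\<Sum>i<n. brk Q ((map (tw Q) xs)[i := brk Q (xs ! i # ys)]))"
    using hom_leibnizD(7)[OF hB ntuple_prod_alg(2)[OF xs S] ntuple_prod_alg(2)[OF ys S]] lx
    by (simp add: Q_def snd_sum map_update o_def)
qed

lemma hom_leibniz_prod_alg: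
  assumes hA: "hom_leibniz n A" and hB: "hom_leibniz n B" and S: "S \<subseteq> carr A \<times> carr B"
    and zero: "(0, 0) \<in> S" and add: "\<And>x y. x \<in> S \<Longrightarrow> y \<in> S \<Longrightarrow> x + y \<in> S"
    and smul: "\<And>c x. x \<in> S \<Longrightarrow> (smul A c (fst x), smul B c (snd x)) \<in> S"
    and brk: "\<And>xs. length xs = n \<Longrightarrow> set xs \<subseteq> S \<Longrightarrow> (brk A (map fst xs), brk B (map snd xs)) \<in> S"
    and tw: "\<And>x. x \<in> S \<Longrightarrow> (tw A (fst x), tw B (snd x)) \<in> S"
  shows "hom_leibniz n (prod_alg A B S)"
proof -
  let ?Q = "prod_alg A B S"
  have fS: "fst x \<in> carr A" "snd x \<in> carr B" if "x \<in> S" for x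
    using S that by auto
  have "vspace ?Q"
    unfolding vspace_def using zero add smul fS vspaceD[OF hom_leibnizD(1)[OF hA]]
      vspaceD[OF hom_leibnizD(1)[OF hB]] by (auto simp: zero_prod_def)
  moreover have "lin_map ?Q ?Q (tw ?Q)"
    unfolding lin_map_def using tw fS lin_mapD[OF hom_leibnizD(2)[OF hA]]
      lin_mapD[OF hom_leibnizD(2)[OF hB]] by auto
  moreover have "brk ?Q (xs[i := x + y]) = brk ?Q (xs[i := x]) + brk ?Q (xs[i := y])"
    if "ntuple n ?Q xs" "i < n" "x \<in> S" "y \<in> S" for xs i x y
    using hom_leibnizD(4)[OF hA ntuple_prod_alg(1)[OF that(1) S] that(2)]
      hom_leibnizD(4)[OF hB ntuple_prod_alg(2)[OF that(1) S] that(2)] that(3,4) fS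
    by (simp add: map_update)
  moreover have "brk ?Q (xs[i := smul ?Q c x]) = smul ?Q c (brk ?Q (xs[i := x]))"
    if "ntuple n ?Q xs" "i < n" "x \<in> S" for xs i c x
    using hom_leibnizD(5)[OF hA ntuple_prod_alg(1)[OF that(1) S] that(2)]
      hom_leibnizD(5)[OF hB ntuple_prod_alg(2)[OF that(1) S] that(2)] that(3) fS
    by (simp add: map_update)
  moreover have "tw ?Q (brk ?Q xs) = brk ?Q (map (tw ?Q) xs)" if "ntuple n ?Q xs" for xs
    using hom_leibnizD(6)[OF hA ntuple_prod_alg(1)[OF that S]]
      hom_leibnizD(6)[OF hB ntuple_prod_alg(2)[OF that S]] by (simp add: o_def)
  moreover have "brk ?Q xs \<in> S" if "ntuple n ?Q xs" for xs
    using brk that unfolding ntuple_def by auto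
  ultimately show ?thesis
    unfolding hom_leibniz_def using prod_alg_leibniz[OF hA hB S] by simp
qed

lemma hom_prod_alg_fst: "S \<subseteq> carr A \<times> carr B \<Longrightarrow> hom n (prod_alg A B S) A fst"
  unfolding hom_def lin_map_def by auto

lemma hom_prod_alg_snd: "S \<subseteq> carr A \<times> carr B \<Longrightarrow> hom n (prod_alg A B S) B snd"
  unfolding hom_def lin_map_def by auto

lemma hom_pair:
  assumes f: "hom n H A f" and g: "hom n H B g" and S: "\<And>x. x \<in> carr H \<Longrightarrow> (f x, g x) \<in> S"
  shows "hom n H (prod_alg A B S) (\<lambda>x. (f x, g x))"
  unfolding hom_def lin_map_def
  using S lin_mapD(2,3)[OF homD(1)[OF f]] lin_mapD(2,3)[OF homD(1)[OF g]]
    homD(2,3)[OF f] homD(2,3)[OF g] by (simp add: o_def)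

lemma hom_leibniz_restrict:
  assumes hA: "hom_leibniz n A" and S: "S \<subseteq> carr A"
    and zero: "0 \<in> S" and add: "\<And>x y. x \<in> S \<Longrightarrow> y \<in> S \<Longrightarrow> x + y \<in> S"
    and smul: "\<And>c x. x \<in> S \<Longrightarrow> smul A c x \<in> S"
    and brk: "\<And>xs. ntuple n A xs \<Longrightarrow> set xs \<subseteq> S \<Longrightarrow> brk A xs \<in> S"
    and tw: "\<And>x. x \<in> S \<Longrightarrow> tw A x \<in> S"
  shows "hom_leibniz n (A\<lparr>carr := S\<rparr>)"
proof -
  have "ntuple m A xs" if "ntuple m (A\<lparr>carr := S\<rparr>) xs" for m xs
    using that S unfolding ntuple_def by auto
  moreover have "vspace (A\<lparr>carr := S\<rparr>)"
    unfolding vspace_def using zero add smul S vspaceD[OF hom_leibnizD(1)[OF hA]]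
    by (auto simp: subset_iff)
  moreover have "lin_map (A\<lparr>carr := S\<rparr>) (A\<lparr>carr := S\<rparr>) (tw A)"
    unfolding lin_map_def using tw S lin_mapD[OF hom_leibnizD(2)[OF hA]] by (auto simp: subset_iff)
  ultimately show ?thesis
    unfolding hom_leibniz_def using hom_leibnizD(4-7)[OF hA] brk S
    by (simp add: ntuple_def subset_iff)
qed

lemma hom_leibniz_derived_restrict: "hom_leibniz n A \<Longrightarrow> hom_leibniz n (A\<lparr>carr := derived n A\<rparr>)"
  by (rule hom_leibniz_restrict)
    (auto intro: derived.intros tw_derived derived_subset[THEN subsetD])

lemma hom_leibniz_zero_brk:
  assumes "vspace A" "lin_map A A (tw A)" "brk A = (\<lambda>_. 0)"
  shows "hom_leibniz n A"
  unfolding hom_leibniz_def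
  using assms vspaceD(1) vspace_smul_zero_right lin_map_zero by fastforce

lemma subspace_lin_map_image:
  assumes f: "lin_map A B f" and v: "vspace A"
  shows "subspace B (f ` carr A)"
  unfolding subspace_def
proof (intro conjI ballI allI)
  show "f ` carr A \<subseteq> carr B" "0 \<in> f ` carr A"
    using lin_mapD(1)[OF f] lin_map_zero[OF f v] vspaceD(1)[OF v] by (auto simp: image_iff)
  show "x + y \<in> f ` carr A" if "x \<in> f ` carr A" "y \<in> f ` carr A" for x y
    using that lin_mapD(2)[OF f] vspaceD(2)[OF v] by (auto simp: image_iff) metis
  show "smul B c x \<in> f ` carr A" if "x \<in> f ` carr A" for c x
    using that lin_mapD(3)[OF f] vspaceD(3)[OF v] by (auto simp: image_iff) metis
qed

lemma vspace_subspace: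
  assumes v: "vspace A" and S: "subspace A S" and "carr B = S" and "smul B = smul A"
  shows "vspace B"
  unfolding vspace_def using assms subspaceD[OF S] vspaceD[OF v] by (auto simp: subset_iff)

text \<open>With p a projection killing exactly the derived subalgebra, this realizes the abelian
  quotient A / derived n A on the image of p.\<close>
definition abelian_quotient :: "('k::field, 'a::ab_group_add) hlnalg \<Rightarrow> ('a \<Rightarrow> 'a) \<Rightarrow> ('k, 'a) hlnalg"
  where "abelian_quotient A p = A\<lparr>carr := p ` carr A, brk := (\<lambda>_. 0), tw := p \<circ> tw A\<rparr>"

lemma abelian_quotient_simps [simp]:
  "carr (abelian_quotient A p) = p ` carr A"
  "smul (abelian_quotient A p) = smul A"
  "brk (abelian_quotient A p) = (\<lambda>_. 0)"
  "tw (abelian_quotient A p) = p \<circ> tw A"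
  unfolding abelian_quotient_def by simp_all

locale derived_projection =
  fixes n :: nat and A :: "('k::field, 'a::ab_group_add) hlnalg" and p :: "'a \<Rightarrow> 'a"
  assumes hom_leibniz: "hom_leibniz n A"
    and lin: "lin_map A A p"
    and kills_derived: "\<And>x. x \<in> derived n A \<Longrightarrow> p x = 0"
    and diff_derived: "\<And>x. x \<in> carr A \<Longrightarrow> x - p x \<in> derived n A"
begin

lemma p_tw:
  assumes x: "x \<in> carr A"
  shows "p (tw A x) = p (tw A (p x))"
proof -
  have v: "vspace A" and twl: "lin_map A A (tw A)"
    using hom_leibnizD(1,2)[OF hom_leibniz] .
  have px: "p x \<in> carr A"
    using lin_mapD(1)[OF lin x] .
  have "tw A x - tw A (p x) \<in> derived n A"
    using tw_derived[OF hom_leibniz diff_derived[OF x]] lin_map_diff[OF twl v x px] by simp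
  then have "p (tw A x) - p (tw A (p x)) = 0"
    using kills_derived lin_map_diff[OF lin v lin_mapD(1)[OF twl x] lin_mapD(1)[OF twl px]] by simp
  then show ?thesis
    by simp
qed

lemma hom_leibniz_abelian_quotient: "hom_leibniz m (abelian_quotient A p)"
proof (rule hom_leibniz_zero_brk)
  have v: "vspace A"
    using hom_leibnizD(1)[OF hom_leibniz] .
  show "vspace (abelian_quotient A p)"
    using vspace_subspace[OF v subspace_lin_map_image[OF lin v]] by simp
  show "lin_map (abelian_quotient A p) (abelian_quotient A p) (tw (abelian_quotient A p))"
    unfolding lin_map_def using lin_mapD[OF lin] lin_mapD[OF hom_leibnizD(2)[OF hom_leibniz]]
    by auto
qed simp

lemma hom_abelian_quotient_proj: "hom n A (abelian_quotient A p) p"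
  unfolding hom_def lin_map_def
  using lin_mapD[OF lin] kills_derived[OF derived_brk] p_tw by auto

lemma hom_abelian_quotient_zero: "hom n A (abelian_quotient A p) (\<lambda>_. 0)"
  unfolding hom_def lin_map_def
  using lin_mapD(1)[OF lin] lin_map_zero[OF lin hom_leibnizD(1)[OF hom_leibniz]]
    vspace_smul_zero_right[OF hom_leibnizD(1)[OF hom_leibniz]]
    vspaceD(1)[OF hom_leibnizD(1)[OF hom_leibniz]]
    lin_map_zero[OF hom_leibnizD(2,1)[OF hom_leibniz]]
  by (auto simp: image_iff)

end

lemma hom_leibniz_direct_prod:
  assumes hA: "hom_leibniz n A" and hB: "hom_leibniz n B"
  shows "hom_leibniz n (prod_alg A B (carr A \<times> carr B))"
proof (rule hom_leibniz_prod_alg[OF hA hB subset_refl])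
  show "(brk A (map fst xs), brk B (map snd xs)) \<in> carr A \<times> carr B"
    if "length xs = n" "set xs \<subseteq> carr A \<times> carr B" for xs
  proof -
    have "fst ` set xs \<subseteq> carr A" "snd ` set xs \<subseteq> carr B"
      using that(2) by auto
    then show ?thesis
      using hom_leibnizD(3)[OF hA, of "map fst xs"] hom_leibnizD(3)[OF hB, of "map snd xs"] that(1)
      unfolding ntuple_def by simp
  qed
qed (use vspaceD(1-3)[OF hom_leibnizD(1)[OF hA]] vspaceD(1-3)[OF hom_leibnizD(1)[OF hB]]
    lin_mapD(1)[OF hom_leibnizD(2)[OF hA]] lin_mapD(1)[OF hom_leibnizD(2)[OF hB]] in auto)

lemma zero_brk_prod_brk_eq_zero:
  assumes zero: "brk A = (\<lambda>_. 0)" and hY: "hom_leibniz n Y"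
    and xs: "ntuple n (prod_alg A Y (carr A \<times> carr Y)) xs" and i: "i < n" and snd0: "snd (xs ! i) = 0"
  shows "brk (prod_alg A Y (carr A \<times> carr Y)) xs = 0"
proof -
  have "ntuple n Y (map snd xs)"
    using ntuple_prod_alg(2)[OF xs subset_refl] .
  then have "brk Y ((map snd xs)[i := 0]) = 0"
    using brk_update_zero[OF hY _ i] by blast
  moreover have "(map snd xs)[i := 0] = map snd xs"
    using xs i snd0 list_update_id[of "map snd xs" i] unfolding ntuple_def by simp
  ultimately show ?thesis
    using zero by (simp add: zero_prod_def)
qed

lemma zero_brk_prod_ext:
  assumes hA: "hom_leibniz n A" and zero: "brk A = (\<lambda>_. 0)" and hY: "hom_leibniz n Y"
    and n2: "n \<ge> 2"
  defines "Q \<equiv> prod_alg A Y (carr A \<times> carr Y)"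
  shows "central_ext n Q Y snd" and "alpha_central_ext n Q Y snd"
proof -
  have "snd ` carr Q = carr Y"
    using vspaceD(1)[OF hom_leibnizD(1)[OF hA]] unfolding Q_def by force
  then have ext: "ext n Q Y snd"
    unfolding ext_def Q_def using hom_leibniz_direct_prod[OF hA hY] hY hom_prod_alg_snd[OF subset_refl]
    by simp
  note brk_zero = zero_brk_prod_brk_eq_zero[OF zero hY, folded Q_def]
  have "x \<in> center n Q" if x: "x \<in> carr Q" "snd x = 0" for x
  proof -
    have "brk Q (xs[i := x]) = 0" if "ntuple n Q xs" "i < n" for xs i
      using brk_zero[OF ntuple_update[OF that(1) x(1)] that(2)] x(2) that
      unfolding ntuple_def by simp
    then show ?thesis
      unfolding center_def using x(1) by blast
  qed
  then show "central_ext n Q Y snd"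
    unfolding central_ext_def kernel_def using ext by blast
  have "brk Q xs = 0"
    if xs: "ntuple n Q xs" and i: "i < n"
      and tw: "\<forall>j<n. j \<noteq> i \<longrightarrow> xs ! j \<in> tw Q ` kernel Q snd" for xs i
  proof -
    obtain j where j: "j < n" "j \<noteq> i"
      using exists_other_index[OF n2 i] .
    then have "snd (xs ! j) = 0"
      using tw lin_map_zero[OF hom_leibnizD(2,1)[OF hY]] unfolding kernel_def Q_def by auto
    then show ?thesis
      using brk_zero[OF xs j(1)] by simp
  qed
  then show "alpha_central_ext n Q Y snd"
    unfolding alpha_central_ext_def using ext by blast
qed

lemma universal_imp_perfect:
  fixes H :: "('k::field, 'h::ab_group_add) hlnalg" and Y :: "('k, 'y::ab_group_add) hlnalg"
  assumes hH: "hom_leibniz n H" and hY: "hom_leibniz n Y" and n2: "n \<ge> 2" and f: "hom n H Y f"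
    and univ: "\<And>Q :: ('k, 'h \<times> 'y) hlnalg. central_ext n Q Y snd \<Longrightarrow> alpha_central_ext n Q Y snd
      \<Longrightarrow> lifts_uniquely n H Q snd f"
  shows "perfect n H"
proof -
  obtain p where p: "lin_map H H p" "\<And>x. x \<in> derived n H \<Longrightarrow> p x = 0"
    "\<And>x. x \<in> carr H \<Longrightarrow> x - p x \<in> derived n H"
    using exists_projection[OF hom_leibnizD(1)[OF hH] derived_subspace[OF hH]] by blast
  then interpret derived_projection n H p
    using hH by unfold_locales
  let ?A = "abelian_quotient H p"
  let ?Q = "prod_alg ?A Y (carr ?A \<times> carr Y)"
  have "lifts_uniquely n H ?Q snd f"
    using univ zero_brk_prod_ext[OF hom_leibniz_abelian_quotient _ hY n2] by simp
  moreover have "hom n H ?Q (\<lambda>x. (p x, f x))" "hom n H ?Q (\<lambda>x. (0, f x))"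
    using hom_pair[OF hom_abelian_quotient_proj f] hom_pair[OF hom_abelian_quotient_zero f]
      lin_mapD(1)[OF homD(1)[OF hom_abelian_quotient_proj]]
      lin_mapD(1)[OF homD(1)[OF hom_abelian_quotient_zero]] lin_mapD(1)[OF homD(1)[OF f]]
    by auto
  ultimately have "p x = 0" if "x \<in> carr H" for x
    using that unfolding lifts_uniquely_def by (metis (no_types, lifting) prod.inject snd_conv)
  then show ?thesis
    unfolding perfect_def using p(3) by fastforce
qed

lemma derived_restrict_alpha_central:
  assumes n2: "n \<ge> 2" and cK: "central_ext n K L \<pi>" and cP: "central_ext n P K \<sigma>"
    and surj: "(\<pi> \<circ> \<sigma>) ` derived n P = carr L"
  shows "alpha_central_ext n (P\<lparr>carr := derived n P\<rparr>) L (\<pi> \<circ> \<sigma>)"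
  unfolding alpha_central_ext_def
proof (intro conjI allI impI)
  have hP: "hom_leibniz n P"
    using central_extD(1)[OF cP] .
  have "hom n P L (\<pi> \<circ> \<sigma>)"
    using hom_comp[OF central_extD(3)[OF cP] central_extD(3)[OF cK]] .
  then show "ext n (P\<lparr>carr := derived n P\<rparr>) L (\<pi> \<circ> \<sigma>)"
    unfolding ext_def using hom_leibniz_derived_restrict[OF hP] central_extD(2)[OF cK]
      hom_restrict_dom[OF _ derived_subset[OF hP]] surj by simp
  fix xs i
  assume "ntuple n (P\<lparr>carr := derived n P\<rparr>) xs \<and> i < n \<and>
    (\<forall>j<n. j \<noteq> i \<longrightarrow> xs ! j \<in> tw (P\<lparr>carr := derived n P\<rparr>) ` kernel (P\<lparr>carr := derived n P\<rparr>) (\<pi> \<circ> \<sigma>))"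
  then have xs: "ntuple n P xs" "xs ! i \<in> derived n P" "i < n"
    and tw: "\<forall>j<n. j \<noteq> i \<longrightarrow> xs ! j \<in> tw P ` kernel P (\<pi> \<circ> \<sigma>)"
    using derived_subset[OF hP] unfolding ntuple_def kernel_def by (auto 0 4)
  show "brk (P\<lparr>carr := derived n P\<rparr>) xs = 0"
    using brk_comp_kernel_twisted_zero[OF n2 cK cP xs(2,1,3) tw] by simp
qed

lemma comp_image_derived:
  assumes cK: "central_ext n K L \<pi>" and cH: "central_ext n H K \<tau>" and cP: "central_ext n P K \<sigma>"
    and perf: "perfect n H"
  shows "(\<pi> \<circ> \<sigma>) ` derived n P = carr L"
proof -
  have hH: "hom_leibniz n H" and hP: "hom_leibniz n P"
    and t: "hom n H K \<tau>" and s: "hom n P K \<sigma>" and pi: "hom n K L \<pi>"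
    using cK cH cP central_extD by blast+
  have "(\<pi> \<circ> \<sigma>) ` derived n P \<subseteq> carr L"
    using derived_subset[OF hP] lin_mapD(1)[OF homD(1)[OF hom_comp[OF s pi]]] by auto
  moreover have "carr L = (\<pi> \<circ> \<tau>) ` carr H"
    using central_extD(4)[OF cK] central_extD(4)[OF cH] by (metis image_comp)
  moreover have "(\<pi> \<circ> \<tau>) ` carr H \<subseteq> (\<pi> \<circ> \<sigma>) ` derived n P"
    using derived_lift[OF hH hP t s central_extD(4)[OF cP]] perf
    unfolding perfect_def by (force simp: image_iff)
  ultimately show ?thesis
    by blast
qed

lemma lifts_uniquely_of_universal_alpha_comp:
  fixes P :: "('k::field, 'q::ab_group_add) hlnalg"
  assumes n2: "n \<ge> 2" and cK: "central_ext n K L \<pi>" and cH: "central_ext n H K \<tau>"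
    and perf: "perfect n H"
    and univ: "universal_alpha_central_ext n TYPE('q) H L (\<pi> \<circ> \<tau>)"
    and cP: "central_ext n P K \<sigma>"
  shows "lifts_uniquely n H P \<sigma> \<tau>"
proof -
  have hH: "hom_leibniz n H" and hK: "hom_leibniz n K" and hP: "hom_leibniz n P"
    and t: "hom n H K \<tau>" and s: "hom n P K \<sigma>" and pi: "hom n K L \<pi>"
    using cK cH cP central_extD by blast+
  let ?Q = "P\<lparr>carr := derived n P\<rparr>"
  have "(\<pi> \<circ> \<sigma>) ` derived n P = carr L"
    using comp_image_derived[OF cK cH cP perf] .
  then have "lifts_uniquely n H ?Q (\<pi> \<circ> \<sigma>) (\<pi> \<circ> \<tau>)"
    using univ derived_restrict_alpha_central[OF n2 cK cP]
    unfolding universal_alpha_central_ext_def by blast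
  then obtain \<Phi> where Phi: "hom n H ?Q \<Phi>" "\<forall>x\<in>carr H. (\<pi> \<circ> \<sigma>) (\<Phi> x) = (\<pi> \<circ> \<tau>) x"
    and unique: "\<And>h. hom n H ?Q h \<Longrightarrow> \<forall>x\<in>carr H. (\<pi> \<circ> \<sigma>) (h x) = (\<pi> \<circ> \<tau>) x \<Longrightarrow>
      \<forall>x\<in>carr H. h x = \<Phi> x"
    unfolding lifts_uniquely_def by blast
  have Phi_P: "hom n H P \<Phi>"
    using hom_extend_codom[OF Phi(1) derived_subset[OF hP]] .
  txt \<open>Phi only lifts pi o tau, so sigma o Phi and tau differ by elements of ker pi, which are
    central; such maps agree on the perfect H.\<close>
  have "\<sigma> (\<Phi> x) - \<tau> x \<in> center n K" if "x \<in> carr H" for x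
    using central_extD(5)[OF cK] Phi(2) that lin_mapD(1)[OF homD(1)[OF hom_comp[OF Phi_P s]]]
      lin_mapD(1)[OF homD(1)[OF t]]
      lin_map_diff[OF homD(1)[OF pi] hom_leibnizD(1)[OF hK]] vspace_diff_closed[OF hom_leibnizD(1)[OF hK]]
    by simp
  then have lift: "\<forall>x\<in>carr H. \<sigma> (\<Phi> x) = \<tau> x"
    using hom_eq_on_derived[OF hH hK hom_comp[OF Phi_P s] t] perf unfolding perfect_def by auto
  have "\<forall>x\<in>carr H. h x = \<Phi> x" if h: "hom n H P h" "\<forall>x\<in>carr H. \<sigma> (h x) = \<tau> x" for h
  proof -
    have "hom n H ?Q h"
      using hom_restrict_codom[OF h(1)] hom_image_derived[OF hH h(1) hom_leibnizD(1)[OF hP]] perf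
      unfolding perfect_def by blast
    then show ?thesis
      using unique h(2) by simp
  qed
  then show ?thesis
    unfolding lifts_uniquely_def using Phi_P lift by blast
qed

lemma universal_central_of_universal_alpha_comp:
  fixes H :: "('k::field, 'h::ab_group_add) hlnalg" and L :: "('k, 'l::ab_group_add) hlnalg"
  assumes n2: "n \<ge> 2" and cK: "central_ext n K L \<pi>" and cH: "central_ext n H K \<tau>"
    and univ: "universal_alpha_central_ext n TYPE('q::ab_group_add) H L (\<pi> \<circ> \<tau>)"
    and univ_prod: "universal_alpha_central_ext n TYPE('h \<times> 'l) H L (\<pi> \<circ> \<tau>)"
  shows "universal_central_ext n TYPE('q) H K \<tau>"
proof -
  have "perfect n H"
    using universal_imp_perfect[OF central_extD(1)[OF cH] central_extD(2)[OF cK] n2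
        hom_comp[OF central_extD(3)[OF cH] central_extD(3)[OF cK]]] univ_prod
    unfolding universal_alpha_central_ext_def by blast
  then show ?thesis
    unfolding universal_central_ext_def
    using lifts_uniquely_of_universal_alpha_comp[OF n2 cK cH _ univ] cH by blast
qed

definition pullback :: "('k::field, 'p::ab_group_add) hlnalg \<Rightarrow> ('k, 'm::ab_group_add) hlnalg \<Rightarrow>
    ('p \<Rightarrow> 'l) \<Rightarrow> ('m \<Rightarrow> 'l) \<Rightarrow> ('k, 'p \<times> 'm) hlnalg" where
  "pullback P K \<omega> \<pi> = prod_alg P K {x \<in> carr P \<times> carr K. \<omega> (fst x) = \<pi> (snd x)}"

lemma hom_leibniz_pullback:
  assumes hP: "hom_leibniz n P" and hK: "hom_leibniz n K"
    and w: "hom n P L \<omega>" and pi: "hom n K L \<pi>" and vL: "vspace L"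
  shows "hom_leibniz n (pullback P K \<omega> \<pi>)"
  unfolding pullback_def
proof (rule hom_leibniz_prod_alg[OF hP hK])
  note vP = hom_leibnizD(1)[OF hP] and vK = hom_leibnizD(1)[OF hK]
    and lw = lin_mapD[OF homD(1)[OF w]] and lpi = lin_mapD[OF homD(1)[OF pi]]
  show "(0, 0) \<in> {x \<in> carr P \<times> carr K. \<omega> (fst x) = \<pi> (snd x)}"
    using vspaceD(1)[OF vP] vspaceD(1)[OF vK] lin_map_zero[OF homD(1)[OF w] vP]
      lin_map_zero[OF homD(1)[OF pi] vK] by simp
  show "(brk P (map fst xs), brk K (map snd xs)) \<in> {x \<in> carr P \<times> carr K. \<omega> (fst x) = \<pi> (snd x)}"
    if "length xs = n" "set xs \<subseteq> {x \<in> carr P \<times> carr K. \<omega> (fst x) = \<pi> (snd x)}" for xs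
  proof -
    have xs: "ntuple n P (map fst xs)" "ntuple n K (map snd xs)"
      using that unfolding ntuple_def by auto
    have fibre: "map \<omega> (map fst xs) = map \<pi> (map snd xs)"
      using that(2) by auto
    have "\<omega> (brk P (map fst xs)) = brk L (map \<omega> (map fst xs))"
      using homD(2)[OF w xs(1)] .
    also have "\<dots> = \<pi> (brk K (map snd xs))"
      unfolding fibre using homD(2)[OF pi xs(2)] by (rule sym)
    finally show ?thesis
      using hom_leibnizD(3)[OF hP xs(1)] hom_leibnizD(3)[OF hK xs(2)] by simp
  qed
qed (use vspaceD(2,3)[OF hom_leibnizD(1)[OF hP]] vspaceD(2,3)[OF hom_leibnizD(1)[OF hK]]
    lin_mapD[OF homD(1)[OF w]] lin_mapD[OF homD(1)[OF pi]] homD(3)[OF w] homD(3)[OF pi]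
    lin_mapD(1)[OF hom_leibnizD(2)[OF hP]] lin_mapD(1)[OF hom_leibnizD(2)[OF hK]] in auto)

lemma ext_pullback:
  assumes eP: "ext n P L \<omega>" and eK: "ext n K L \<pi>"
  shows "ext n (pullback P K \<omega> \<pi>) K snd"
proof -
  let ?S = "{x \<in> carr P \<times> carr K. \<omega> (fst x) = \<pi> (snd x)}"
  have "carr K \<subseteq> snd ` ?S"
  proof
    fix k assume k: "k \<in> carr K"
    then obtain p where "p \<in> carr P" "\<omega> p = \<pi> k"
      using extD(4)[OF eP] lin_mapD(1)[OF homD(1)[OF extD(3)[OF eK]]] by (metis imageE)
    then show "k \<in> snd ` ?S"
      using k by force
  qed
  then have "snd ` ?S = carr K"
    by auto
  then show ?thesis
    unfolding ext_def pullback_def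
    using hom_leibniz_pullback[OF extD(1)[OF eP] extD(1)[OF eK] extD(3)[OF eP] extD(3)[OF eK]
        hom_leibnizD(1)[OF extD(2)[OF eP]]] hom_prod_alg_snd[of ?S P K] extD(1)[OF eK]
    by (auto simp: pullback_def)
qed

lemma central_ext_pullback:
  assumes cP: "central_ext n P L \<omega>" and eK: "ext n K L \<pi>"
  shows "central_ext n (pullback P K \<omega> \<pi>) K snd"
proof -
  let ?S = "{x \<in> carr P \<times> carr K. \<omega> (fst x) = \<pi> (snd x)}"
  have S: "?S \<subseteq> carr P \<times> carr K"
    by auto
  have "x \<in> center n (pullback P K \<omega> \<pi>)" if x: "x \<in> ?S" "snd x = 0" for x
  proof -
    have "\<omega> (fst x) = 0"
      using x lin_map_zero[OF homD(1)[OF extD(3)[OF eK]] hom_leibnizD(1)[OF extD(1)[OF eK]]] by auto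
    then have fst_center: "fst x \<in> center n P"
      using central_extD(5)[OF cP] x by auto
    have "brk (pullback P K \<omega> \<pi>) (xs[i := x]) = 0"
      if "ntuple n (pullback P K \<omega> \<pi>) xs" "i < n" for xs i
    proof -
      have xs: "ntuple n P (map fst xs)" "ntuple n K (map snd xs)"
        using ntuple_prod_alg[OF that(1)[unfolded pullback_def] S] by auto
      then show ?thesis
        using brk_update_zero[OF extD(1)[OF eK] xs(2) that(2)] fst_center that(2) x(2)
        unfolding center_def by (simp add: pullback_def map_update zero_prod_def)
    qed
    then show ?thesis
      unfolding center_def using x(1) by (simp add: pullback_def)
  qed
  then show ?thesis
    unfolding central_ext_def kernel_def
    using ext_pullback[OF cP[unfolded central_ext_def, THEN conjunct1] eK] by (auto simp: pullback_def)
qed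

lemma lifts_uniquely_of_universal_central:
  fixes P :: "('k::field, 'q::ab_group_add) hlnalg" and K :: "('k, 'm::ab_group_add) hlnalg"
  assumes cK: "central_ext n K L \<pi>" and univ: "universal_central_ext n TYPE('q \<times> 'm) H K \<tau>"
    and cP: "central_ext n P L \<omega>"
  shows "lifts_uniquely n H P \<omega> (\<pi> \<circ> \<tau>)"
proof -
  let ?Q = "pullback P K \<omega> \<pi>"
  have t: "hom n H K \<tau>"
    using univ central_extD(3) unfolding universal_central_ext_def by blast
  have S: "{x \<in> carr P \<times> carr K. \<omega> (fst x) = \<pi> (snd x)} \<subseteq> carr P \<times> carr K"
    by auto
  have "lifts_uniquely n H ?Q snd \<tau>"
    using univ central_ext_pullback[OF cP cK[unfolded central_ext_def, THEN conjunct1]]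
    unfolding universal_central_ext_def by blast
  then obtain \<Psi> where Psi: "hom n H ?Q \<Psi>" "\<forall>x\<in>carr H. snd (\<Psi> x) = \<tau> x"
    and unique: "\<And>h. hom n H ?Q h \<Longrightarrow> \<forall>x\<in>carr H. snd (h x) = \<tau> x \<Longrightarrow> \<forall>x\<in>carr H. h x = \<Psi> x"
    unfolding lifts_uniquely_def by blast
  have "hom n H P (fst \<circ> \<Psi>)"
    using hom_comp[OF Psi(1)[unfolded pullback_def] hom_prod_alg_fst[OF S]] .
  moreover have "\<forall>x\<in>carr H. \<omega> ((fst \<circ> \<Psi>) x) = (\<pi> \<circ> \<tau>) x"
    using lin_mapD(1)[OF homD(1)[OF Psi(1)]] Psi(2) by (simp add: pullback_def)
  moreover have "\<forall>x\<in>carr H. h x = (fst \<circ> \<Psi>) x"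
    if h: "hom n H P h" "\<forall>x\<in>carr H. \<omega> (h x) = (\<pi> \<circ> \<tau>) x" for h
  proof -
    have "hom n H ?Q (\<lambda>x. (h x, \<tau> x))"
      unfolding pullback_def
      using hom_pair[OF h(1) t] h(2) lin_mapD(1)[OF homD(1)[OF h(1)]] lin_mapD(1)[OF homD(1)[OF t]]
      by simp
    then show ?thesis
      using unique by fastforce
  qed
  ultimately show ?thesis
    unfolding lifts_uniquely_def by blast
qed

lemma alpha_central_comp_of_perfect:
  assumes n2: "n \<ge> 2" and cK: "central_ext n K L \<pi>" and cH: "central_ext n H K \<tau>"
    and perf: "perfect n H"
  shows "alpha_central_ext n H L (\<pi> \<circ> \<tau>)"
  unfolding alpha_central_ext_def
proof (intro conjI allI impI)
  show "ext n H L (\<pi> \<circ> \<tau>)"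
    using ext_comp cK cH unfolding central_ext_def by blast
  fix xs i
  assume "ntuple n H xs \<and> i < n \<and> (\<forall>j<n. j \<noteq> i \<longrightarrow> xs ! j \<in> tw H ` kernel H (\<pi> \<circ> \<tau>))"
  moreover have "xs ! i \<in> derived n H" if "ntuple n H xs" "i < n"
    using perf ntuple_nth[OF that] unfolding perfect_def by blast
  ultimately show "brk H xs = 0"
    using brk_comp_kernel_twisted_zero[OF n2 cK cH] by (metis list_update_id)
qed

theorem proposition5p8:
  fixes n :: nat
    and L :: "('k::field, 'l::ab_group_add) hlnalg"
    and K :: "('k, 'm::ab_group_add) hlnalg"
    and H :: "('k, 'h::ab_group_add) hlnalg"
    and \<pi> :: "'m \<Rightarrow> 'l" and \<tau> :: "'h \<Rightarrow> 'm"
  assumes "n \<ge> 2"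
    and "central_ext n K L \<pi>"
    and "central_ext n H K \<tau>"
  shows "(universal_alpha_central_ext n TYPE('q::ab_group_add) H L (\<pi> \<circ> \<tau>) \<and>
          universal_alpha_central_ext n TYPE('h \<times> 'l) H L (\<pi> \<circ> \<tau>) \<and>
          universal_alpha_central_ext n TYPE('q \<times> 'l) H L (\<pi> \<circ> \<tau>)
            \<longrightarrow> universal_central_ext n TYPE('q) H K \<tau>)
       \<and> (universal_central_ext n TYPE('q \<times> 'm) H K \<tau> \<and>
          universal_central_ext n TYPE('h \<times> 'm) H K \<tau> \<and>
          universal_central_ext n TYPE('q) H K \<tau>
            \<longrightarrow> alpha_central_ext n H L (\<pi> \<circ> \<tau>) \<and>
                (\<forall>(P :: ('k, 'q) hlnalg) \<omega>. central_ext n P L \<omega> \<longrightarrow> lifts_uniquely n H P \<omega> (\<pi> \<circ> \<tau>)))"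
proof (intro conjI impI)
  assume "universal_alpha_central_ext n TYPE('q) H L (\<pi> \<circ> \<tau>) \<and>
    universal_alpha_central_ext n TYPE('h \<times> 'l) H L (\<pi> \<circ> \<tau>) \<and>
    universal_alpha_central_ext n TYPE('q \<times> 'l) H L (\<pi> \<circ> \<tau>)"
  then show "universal_central_ext n TYPE('q) H K \<tau>"
    using universal_central_of_universal_alpha_comp[OF assms] by blast
next
  assume univ: "universal_central_ext n TYPE('q \<times> 'm) H K \<tau> \<and>
    universal_central_ext n TYPE('h \<times> 'm) H K \<tau> \<and> universal_central_ext n TYPE('q) H K \<tau>"
  have "perfect n H"
    using universal_imp_perfect[OF central_extD(1)[OF assms(3)] central_extD(1)[OF assms(2)]
        assms(1) central_extD(3)[OF assms(3)]] univ
    unfolding universal_central_ext_def by blast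
  then show "alpha_central_ext n H L (\<pi> \<circ> \<tau>)"
    using alpha_central_comp_of_perfect[OF assms] by blast
  show "\<forall>(P :: ('k, 'q) hlnalg) \<omega>. central_ext n P L \<omega> \<longrightarrow> lifts_uniquely n H P \<omega> (\<pi> \<circ> \<tau>)"
    using lifts_uniquely_of_universal_central[OF assms(2)] univ by blast
qed

end
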